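(* Let $m\ge 2$, $n=2m$, let $t$ be an integer with $1\le t\le m-1$ such that $m/\gcd(m,t)$ is odd, and let $\gamma(X_0,\ldots,X_{m-1})\in\mathbb{F}_2[X_0,\ldots,X_{m-1}]$ be a reduced polynomial. Define $f_t:\mathbb{F}_2^n\to\mathbb{F}_2$ by $$f_t(x)=\sum_{i=0}^{n-1}\left(x_ix_{i+t}x_{i+m}+x_ix_{i+t}\right)+\sum_{i=0}^{m-1}x_ix_{i+m}+\gamma(x_0+x_m,\,x_1+x_{m+1},\,\ldots,\,x_{m-1}+x_{2m-1}),$$ where indices of $x$ are taken modulo $n$. Then $f_t$ is a bent function. Moreover, if $\gamma$ is rotation symmetric (i.e. $\gamma(X_0,X_1,\ldots,X_{m-1})=\gamma(X_1,\ldots,X_{m-1},X_0)$) of algebraic degree $d\ge 3$, then $f_t$ is a rotation symmetric bent function of algebraic degree $d$.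
   Context: Every Boolean function $f:\mathbb{F}_2^n\to\mathbb{F}_2$ is identified with its algebraic normal form, a reduced polynomial $\sum_{u\in\mathbb{F}_2^n}c_u\prod_{i=0}^{n-1}x_i^{u_i}$ with $c_u\in\mathbb{F}_2$ (each variable appears with exponent at most 1); its algebraic degree is the largest number of variables in a monomial with nonzero coefficient. $f$ is rotation symmetric if $f(x_1,x_2,\ldots,x_{n-1},x_0)=f(x_0,x_1,\ldots,x_{n-1})$ for all $x\in\mathbb{F}_2^n$. The Walsh transform is $\mathcal{W}_f(b)=\sum_{x\in\mathbb{F}_2^n}(-1)^{f(x)+\sum_i x_ib_i}$, and $f$ is bent if $\mathcal{W}_f(b)=\pm 2^{n/2}$ for all $b\in\mathbb{F}_2^n$. *)

theory Defs
  imports Main "HOL-Library.Z2"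
begin

text \<open>Vectors of F_2^n are functions nat => bit vanishing at indices >= n.\<close>
definition cube :: "nat \<Rightarrow> (nat \<Rightarrow> bit) set" where
  "cube n = {x. \<forall>i\<ge>n. x i = 0}"

text \<open>A reduced polynomial in variables X_0..X_{n-1} over F_2: coefficient c u of the
monomial prod_{i in u} X_i, supported on subsets of {..<n}.\<close>
definition is_rpoly :: "nat \<Rightarrow> (nat set \<Rightarrow> bit) \<Rightarrow> bool" where
  "is_rpoly n c \<longleftrightarrow> (\<forall>u. c u \<noteq> 0 \<longrightarrow> u \<subseteq> {..<n})"

definition rpoly_eval :: "nat \<Rightarrow> (nat set \<Rightarrow> bit) \<Rightarrow> (nat \<Rightarrow> bit) \<Rightarrow> bit" where
  "rpoly_eval n c x = (\<Sum>u\<in>Pow {..<n}. c u * (\<Prod>i\<in>u. x i))"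

definition rpoly_degree :: "(nat set \<Rightarrow> bit) \<Rightarrow> nat" where
  "rpoly_degree c = Max (insert 0 (card ` {u. c u \<noteq> 0}))"

text \<open>Algebraic degree of a Boolean function on F_2^n: degree of its algebraic normal form,
the unique reduced polynomial representing it.\<close>
definition alg_degree :: "nat \<Rightarrow> ((nat \<Rightarrow> bit) \<Rightarrow> bit) \<Rightarrow> nat" where
  "alg_degree n f = rpoly_degree (THE c. is_rpoly n c \<and> (\<forall>x\<in>cube n. rpoly_eval n c x = f x))"

definition rot :: "nat \<Rightarrow> (nat \<Rightarrow> bit) \<Rightarrow> (nat \<Rightarrow> bit)" where
  "rot n x = (\<lambda>i. if i < n then x ((i + 1) mod n) else 0)"

definition rotation_symmetric :: "nat \<Rightarrow> ((nat \<Rightarrow> bit) \<Rightarrow> bit) \<Rightarrow> bool" where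
  "rotation_symmetric n f \<longleftrightarrow> (\<forall>x\<in>cube n. f (rot n x) = f x)"

definition sgn_bit :: "bit \<Rightarrow> int" where
  "sgn_bit b = (if b = 0 then 1 else -1)"

definition walsh :: "nat \<Rightarrow> ((nat \<Rightarrow> bit) \<Rightarrow> bit) \<Rightarrow> (nat \<Rightarrow> bit) \<Rightarrow> int" where
  "walsh n f b = (\<Sum>x\<in>cube n. sgn_bit (f x + (\<Sum>i<n. x i * b i)))"

definition bent :: "nat \<Rightarrow> ((nat \<Rightarrow> bit) \<Rightarrow> bit) \<Rightarrow> bool" where
  "bent n f \<longleftrightarrow> even n \<and> (\<forall>b\<in>cube n. walsh n f b = 2 ^ (n div 2) \<or> walsh n f b = - (2 ^ (n div 2)))"

end

theory Submission
  imports Defs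
begin

text \<open>Write a point of \<open>F_2^{2m}\<close> as \<open>x = (a, a + y)\<close>, so that \<open>y_i = x_i + x_{i+m}\<close> is the
argument of \<open>\<gamma>\<close>. Then \<open>f_t(x) + b \<cdot> x = a \<cdot> (\<phi>(y) + \<beta>) + h(y)\<close>, where
\<open>\<phi>(y)_k = y_k y_{k+t} + y_{k-t} + y_k + 1\<close> (indices mod \<open>m\<close>) and \<open>\<beta>_k = b_k + b_{k+m}\<close>.
Summing over \<open>a\<close> first, the Walsh value at \<open>b\<close> is \<open>\<plusminus>2^m\<close> as soon as \<open>\<phi>\<close> is a permutation of
\<open>F_2^m\<close> (the Maiorana--McFarland argument). If \<open>\<phi>(y) = \<phi>(y')\<close> and \<open>y_i \<noteq> y'_i\<close>, the difference
propagates along the orbit \<open>i, i + t, i + 2t, \<dots>\<close> and forces \<open>y\<close> to alternate along it, which is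
impossible because the orbit has odd length \<open>m / gcd(m, t)\<close>.

Rotation symmetry is a reindexing. The algebraic normal form of \<open>f_t\<close> consists of the cubic and
quadratic monomials of its definition together with the expansion of \<open>\<gamma>(x_0 + x_m, \<dots>)\<close>, whose
monomials supported in \<open>{0, \<dots>, m - 1}\<close> are exactly those of \<open>\<gamma>\<close>; so for \<open>deg \<gamma> \<ge> 3\<close> the degrees
agree.\<close>

definition ft_term :: "nat \<Rightarrow> nat \<Rightarrow> (nat \<Rightarrow> bit) \<Rightarrow> nat \<Rightarrow> bit" where
  "ft_term m t x i =
     x i * x ((i + t) mod (2*m)) * x ((i + m) mod (2*m)) + x i * x ((i + t) mod (2*m))"

definition ft :: "nat \<Rightarrow> nat \<Rightarrow> (nat set \<Rightarrow> bit) \<Rightarrow> (nat \<Rightarrow> bit) \<Rightarrow> bit" where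
  "ft m t g x = (\<Sum>i<2*m. ft_term m t x i) + (\<Sum>i<m. x i * x (i + m))
     + rpoly_eval m g (\<lambda>i. x i + x (i + m))"


section \<open>Arithmetic in \<open>F_2\<close> and sums over the cube\<close>

(* keep F_2 arithmetic in ring form rather than XOR/AND, so that ring_distribs and ac_simps apply *)
declare add_bit_eq_xor [simp del] mult_bit_eq_and [simp del]

lemma bit_add_eq_0_iff: "(a::bit) + b = 0 \<longleftrightarrow> a = b"
  by (cases a; cases b) simp_all

lemma of_nat_bit: "(of_nat k :: bit) = of_bool (odd k)"
  by (induction k) auto

lemma sgn_bit_add: "sgn_bit (a + b) = sgn_bit a * sgn_bit b"
  by (cases a; cases b) (simp_all add: sgn_bit_def)

lemma cube_Suc: "cube (Suc m) = cube m \<union> (\<lambda>x. x(m := 1)) ` cube m"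
proof
  show "cube (Suc m) \<subseteq> cube m \<union> (\<lambda>x. x(m := 1)) ` cube m"
  proof
    fix x assume x: "x \<in> cube (Suc m)"
    show "x \<in> cube m \<union> (\<lambda>x. x(m := 1)) ` cube m"
    proof (cases "x m = 0")
      case True
      have "x i = 0" if "m \<le> i" for i
        using x True that by (cases "i = m") (auto simp: cube_def)
      then show ?thesis by (simp add: cube_def)
    next
      case False
      then have "x = (x(m := 0))(m := 1)" by auto
      moreover have "x(m := 0) \<in> cube m" using x by (auto simp: cube_def)
      ultimately show ?thesis by blast
    qed
  qed
qed (auto simp: cube_def)

lemma finite_cube: "finite (cube m)"
proof (induction m)
  case 0
  have "cube 0 = {\<lambda>_. 0}" by (auto simp: cube_def)
  then show ?case by simp
qed (simp add: cube_Suc)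

lemma sum_cube_Suc: "(\<Sum>x\<in>cube (Suc m). F x) = (\<Sum>x\<in>cube m. F x + F (x(m := 1)))"
proof -
  have disj: "cube m \<inter> (\<lambda>x. x(m := 1)) ` cube m = {}"
    by (auto simp: cube_def)
  have "inj_on (\<lambda>x. x(m := 1)) (cube m)"
  proof (rule inj_onI, rule ext)
    fix x y i assume "x \<in> cube m" "y \<in> cube m" "x(m := 1) = y(m := 1)"
    then show "x i = y i" by (cases "i = m") (auto simp: cube_def dest: fun_cong[of _ _ i])
  qed
  then show ?thesis
    unfolding cube_Suc
    by (simp add: sum.union_disjoint[OF finite_cube finite_imageI[OF finite_cube] disj]
        sum.reindex sum.distrib)
qed

lemma sum_cube_sgn_bit_inner:
  "(\<Sum>a\<in>cube m. sgn_bit (\<Sum>k<m. a k * c k)) = (if \<forall>k<m. c k = 0 then 2 ^ m else 0)"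
proof (induction m)
  case 0
  have "cube 0 = {\<lambda>_. 0}" by (auto simp: cube_def)
  then show ?case by (simp add: sgn_bit_def)
next
  case (Suc m)
  have "(\<Sum>a\<in>cube (Suc m). sgn_bit (\<Sum>k<Suc m. a k * c k))
      = (\<Sum>a\<in>cube m. sgn_bit (\<Sum>k<m. a k * c k) * (1 + sgn_bit (c m)))"
    unfolding sum_cube_Suc
  proof (rule sum.cong[OF refl])
    fix a assume "a \<in> cube m"
    then have "a m = 0" by (simp add: cube_def)
    moreover have "(\<Sum>k<m. (a(m := 1)) k * c k) = (\<Sum>k<m. a k * c k)"
      by (rule sum.cong) auto
    ultimately show "sgn_bit (\<Sum>k<Suc m. a k * c k) + sgn_bit (\<Sum>k<Suc m. (a(m := 1)) k * c k)
        = sgn_bit (\<Sum>k<m. a k * c k) * (1 + sgn_bit (c m))"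
      by (simp add: sgn_bit_add algebra_simps sgn_bit_def)
  qed
  also have "\<dots> = (if \<forall>k<Suc m. c k = 0 then 2 ^ Suc m else 0)"
    unfolding sum_distrib_right[symmetric] Suc.IH
    by (cases "c m") (auto simp: sgn_bit_def less_Suc_eq)
  finally show ?case .
qed

lemma sum_lessThan_double: "(\<Sum>i<2*(m::nat). F i) = (\<Sum>j<m. F j + F (j + m))"
proof -
  have "(\<Sum>i<2*m. F i) = (\<Sum>i\<in>{0..<m}. F i) + (\<Sum>i\<in>{m..<2*m}. F i)"
    by (simp add: lessThan_atLeast0 sum.atLeastLessThan_concat)
  also have "(\<Sum>i\<in>{m..<2*m}. F i) = (\<Sum>i\<in>{0..<m}. F (i + m))"
    using sum.shift_bounds_nat_ivl[of F 0 m m] by (simp add: mult_2)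
  finally show ?thesis by (simp add: sum.distrib lessThan_atLeast0)
qed


section \<open>Cyclic reindexing\<close>

lemma add_mod_inj:
  assumes "(i + s) mod m = (j + s) mod m" "i < m" "j < (m::nat)"
  shows "i = j"
  using assms
proof (induction i j rule: linorder_wlog)
  case (le i j)
  then have "m dvd (j + s) - (i + s)" using mod_eq_dvd_iff_nat[of "i + s" "j + s" m] by simp
  then have "m dvd j - i" by simp
  moreover have "j - i < m" using le by linarith
  ultimately show ?case
    using le(1) by (metis dvd_imp_le le_antisym diff_is_0_eq' linorder_not_le zero_less_diff)
qed (simp add: eq_commute)

lemma sum_lessThan_add_mod:
  fixes h :: "nat \<Rightarrow> 'a::comm_monoid_add"
  shows "(\<Sum>i<m. h ((i + s) mod m)) = (\<Sum>i<m. h i)"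
proof -
  have inj: "inj_on (\<lambda>i. (i + s) mod m) {..<m}"
    by (rule inj_onI) (auto intro: add_mod_inj)
  then have "(\<lambda>i. (i + s) mod m) ` {..<m} = {..<m}"
    by (intro endo_inj_surj) auto
  then show ?thesis
    by (metis (no_types, lifting) comp_apply inj sum.reindex sum.cong)
qed

lemma mod_add_diff_cancel:
  assumes "j < m" "t \<le> (m::nat)"
  shows "((j + t) mod m + m - t) mod m = j"
  using assms
  by (metis (lifting) ext add.commute group_cancel.add2 le_add_diff_inverse
      mod_add_right_eq mod_add_self2 mod_less
      ordered_cancel_comm_monoid_diff_class.diff_add_assoc2)

lemma sum_mult_shift_mod:
  fixes a y :: "nat \<Rightarrow> 'a::comm_semiring_0"
  assumes "t \<le> (m::nat)"
  shows "(\<Sum>j<m. y j * a ((j + t) mod m)) = (\<Sum>k<m. a k * y ((k + m - t) mod m))"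
proof -
  have "(\<Sum>j<m. y j * a ((j + t) mod m))
      = (\<Sum>j<m. a ((j + t) mod m) * y (((j + t) mod m + m - t) mod m))"
    using assms by (intro sum.cong) (simp_all add: mod_add_diff_cancel mult.commute)
  then show ?thesis
    by (simp only: sum_lessThan_add_mod[where h = "\<lambda>k. a k * y ((k + m - t) mod m)"])
qed


section \<open>The Maiorana--McFarland decomposition\<close>

definition mm_point :: "nat \<Rightarrow> (nat \<Rightarrow> bit) \<Rightarrow> (nat \<Rightarrow> bit) \<Rightarrow> nat \<Rightarrow> bit" where
  "mm_point m a y i = (if i < m then a i else if i < 2*m then a (i - m) + y (i - m) else 0)"

lemma mm_point_low [simp]: "j < m \<Longrightarrow> mm_point m a y j = a j"
  by (simp add: mm_point_def)

lemma mm_point_high [simp]: "j < m \<Longrightarrow> mm_point m a y (j + m) = a j + y j"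
  by (simp add: mm_point_def)

lemma sum_cube_double:
  "(\<Sum>x\<in>cube (2*m). F x) = (\<Sum>y\<in>cube m. \<Sum>a\<in>cube m. F (mm_point m a y))"
proof -
  define halves where
    "halves x = ((\<lambda>i. if i < m then x i + x (i + m) else 0), (\<lambda>i. if i < m then x i else 0))"
    for x :: "nat \<Rightarrow> bit"
  have "bij_betw (\<lambda>(y, a). mm_point m a y) (cube m \<times> cube m) (cube (2*m))"
  proof (rule bij_betw_byWitness[where f' = halves])
    show "(\<lambda>(y, a). mm_point m a y) ` (cube m \<times> cube m) \<subseteq> cube (2*m)"
      by (auto simp: mm_point_def cube_def)
    show "halves ` cube (2*m) \<subseteq> cube m \<times> cube m"
      by (auto simp: halves_def cube_def)
    show "\<forall>p\<in>cube m \<times> cube m. halves ((\<lambda>(y, a). mm_point m a y) p) = p"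
      by (auto simp: halves_def mm_point_def cube_def fun_eq_iff)
    show "\<forall>x\<in>cube (2*m). (\<lambda>(y, a). mm_point m a y) (halves x) = x"
    proof (intro ballI ext)
      fix x i assume x: "x \<in> cube (2*m)"
      consider "i < m" | "m \<le> i" "i < 2*m" | "2*m \<le> i" by linarith
      then show "(\<lambda>(y, a). mm_point m a y) (halves x) i = x i"
      proof cases
        case 2
        then have "i - m + m = i" by simp
        with 2 show ?thesis by (simp add: halves_def mm_point_def flip: add.assoc)
      qed (use x in \<open>auto simp: halves_def mm_point_def cube_def\<close>)
    qed
  qed
  then show ?thesis
    by (simp add: sum.reindex_bij_betw[symmetric] sum.cartesian_product case_prod_unfold)
qed

lemma bent_mm:
  fixes f :: "(nat \<Rightarrow> bit) \<Rightarrow> bit" and \<phi> :: "(nat \<Rightarrow> bit) \<Rightarrow> nat \<Rightarrow> bit"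
  assumes inj: "inj_on \<phi> (cube m)" and maps: "\<phi> ` cube m \<subseteq> cube m"
    and affine: "\<And>a y b. a \<in> cube m \<Longrightarrow> y \<in> cube m \<Longrightarrow>
      f (mm_point m a y) + (\<Sum>i<2*m. mm_point m a y i * b i)
        = (\<Sum>k<m. a k * (\<phi> y k + b k + b (k + m))) + h b y"
  shows "bent (2*m) f"
  unfolding bent_def
proof (intro conjI ballI)
  fix b :: "nat \<Rightarrow> bit"
  define \<beta> where "\<beta> = (\<lambda>k. if k < m then b k + b (k + m) else 0)"
  have "\<phi> ` cube m = cube m" by (rule endo_inj_surj[OF finite_cube maps inj])
  moreover have "\<beta> \<in> cube m" by (simp add: \<beta>_def cube_def)
  ultimately obtain y0 where y0: "y0 \<in> cube m" "\<phi> y0 = \<beta>" by force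
  have zero_iff: "(\<forall>k<m. \<phi> y k + b k + b (k + m) = 0) \<longleftrightarrow> y = y0" if y: "y \<in> cube m" for y
  proof -
    have "\<phi> y \<in> cube m" using maps y by blast
    then have "(\<forall>k<m. \<phi> y k + b k + b (k + m) = 0) \<longleftrightarrow> \<phi> y = \<beta>"
      by (auto simp: fun_eq_iff \<beta>_def cube_def add.assoc bit_add_eq_0_iff)
    also have "\<dots> \<longleftrightarrow> y = y0" using inj y y0 by (auto dest: inj_onD)
    finally show ?thesis .
  qed
  have summand: "sgn_bit (f (mm_point m a y) + (\<Sum>i<2*m. mm_point m a y i * b i))
      = sgn_bit (h b y) * sgn_bit (\<Sum>k<m. a k * (\<phi> y k + b k + b (k + m)))"
    if "a \<in> cube m" "y \<in> cube m" for a y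
    unfolding affine[OF that] sgn_bit_add by (rule mult.commute)
  have "walsh (2*m) f b
      = (\<Sum>y\<in>cube m. sgn_bit (h b y) * (\<Sum>a\<in>cube m. sgn_bit (\<Sum>k<m. a k * (\<phi> y k + b k + b (k + m)))))"
    unfolding walsh_def sum_cube_double sum_distrib_left by (intro sum.cong refl) (simp add: summand)
  also have "\<dots> = (\<Sum>y\<in>cube m. if y = y0 then sgn_bit (h b y0) * 2 ^ m else 0)"
    by (intro sum.cong refl) (simp add: sum_cube_sgn_bit_inner zero_iff)
  also have "\<dots> = sgn_bit (h b y0) * 2 ^ m"
    using y0(1) finite_cube by simp
  finally show "walsh (2*m) f b = 2 ^ (2*m div 2) \<or> walsh (2*m) f b = - (2 ^ (2*m div 2))"
    by (simp add: sgn_bit_def)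
qed simp

lemma mm_point_at_shift:
  assumes "j < m" "t < m"
  shows "mm_point m a y ((j + t) mod (2*m))
           = a ((j + t) mod m) + (1 + of_bool (j + t < m)) * y ((j + t) mod m)"
    and "mm_point m a y ((j + m + t) mod (2*m))
           = a ((j + t) mod m) + of_bool (j + t < m) * y ((j + t) mod m)"
  using assms by (auto simp: mm_point_def mod_if)

lemma ft_pair_identity:
  fixes a0 y0 a1 y1 e b0 b1 :: bit
  shows "a0 * (a1 + (1 + e) * y1) * (a0 + y0) + a0 * (a1 + (1 + e) * y1)
       + ((a0 + y0) * (a1 + e * y1) * a0 + (a0 + y0) * (a1 + e * y1))
       + a0 * (a0 + y0) + (a0 * b0 + (a0 + y0) * b1)
     = a0 * (y0 * y1 + 1 + y0 + b0 + b1) + y0 * a1 + (e * y0 * y1 + y0 * b1)"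
  by (cases a0; cases y0; cases a1; cases y1; cases e; cases b0; cases b1) simp_all

lemma rpoly_eval_cong:
  "(\<And>i. i < m \<Longrightarrow> z i = z' i) \<Longrightarrow> rpoly_eval m g z = rpoly_eval m g z'"
  unfolding rpoly_eval_def
  by (intro sum.cong refl arg_cong2[where f = "(*)"] prod.cong) auto

lemma ft_mm_point_pair:
  assumes j: "j < m" and "t < m"
  shows "ft_term m t (mm_point m a y) j + ft_term m t (mm_point m a y) (j + m)
        + a j * (a j + y j) + (a j * b j + (a j + y j) * b (j + m))
      = a j * (y j * y ((j + t) mod m) + 1 + y j + b j + b (j + m)) + y j * a ((j + t) mod m)
        + (of_bool (j + t < m) * y j * y ((j + t) mod m) + y j * b (j + m))"
proof -
  define k where "k = (j + t) mod m"
  define e :: bit where "e = of_bool (j + t < m)"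
  have "(j + m) mod (2*m) = j + m" "(j + m + m) mod (2*m) = j"
    using j by (simp_all add: mod_if)
  moreover have "mm_point m a y ((j + t) mod (2*m)) = a k + (1 + e) * y k"
    "mm_point m a y ((j + m + t) mod (2*m)) = a k + e * y k"
    using mm_point_at_shift[OF assms] by (simp_all add: k_def e_def)
  ultimately show ?thesis
    unfolding ft_term_def k_def[symmetric] e_def[symmetric]
    using j by (simp only: mm_point_low mm_point_high ft_pair_identity)
qed

definition mm_perm :: "nat \<Rightarrow> nat \<Rightarrow> (nat \<Rightarrow> bit) \<Rightarrow> nat \<Rightarrow> bit" where
  "mm_perm m t y k =
     (if k < m then y k * y ((k + t) mod m) + y ((k + m - t) mod m) + y k + 1 else 0)"

lemma ft_mm_point:
  assumes "t < m"
  shows "ft m t g (mm_point m a y) + (\<Sum>i<2*m. mm_point m a y i * b i)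
       = (\<Sum>k<m. a k * (mm_perm m t y k + b k + b (k + m)))
         + ((\<Sum>j<m. of_bool (j + t < m) * y j * y ((j + t) mod m) + y j * b (j + m))
            + rpoly_eval m g y)"
proof -
  define x where "x = mm_point m a y"
  define F where "F = ft_term m t x"
  have "rpoly_eval m g (\<lambda>i. x i + x (i + m)) = rpoly_eval m g y"
    by (rule rpoly_eval_cong) (simp add: x_def flip: add.assoc)
  then have "ft m t g x = (\<Sum>j<m. F j + F (j + m)) + (\<Sum>j<m. x j * x (j + m)) + rpoly_eval m g y"
    unfolding ft_def F_def sum_lessThan_double by simp
  moreover have "(\<Sum>i<2*m. x i * b i) = (\<Sum>j<m. x j * b j + x (j + m) * b (j + m))"
    by (rule sum_lessThan_double)
  ultimately have "ft m t g x + (\<Sum>i<2*m. x i * b i)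
      = (\<Sum>j<m. F j + F (j + m) + x j * x (j + m) + (x j * b j + x (j + m) * b (j + m)))
        + rpoly_eval m g y"
    by (simp add: sum.distrib ac_simps)
  also have "(\<Sum>j<m. F j + F (j + m) + x j * x (j + m) + (x j * b j + x (j + m) * b (j + m)))
      = (\<Sum>j<m. a j * (y j * y ((j + t) mod m) + 1 + y j + b j + b (j + m))
          + y j * a ((j + t) mod m)
          + (of_bool (j + t < m) * y j * y ((j + t) mod m) + y j * b (j + m)))"
    using assms by (intro sum.cong) (simp_all add: F_def x_def ft_mm_point_pair)
  also have "\<dots> = (\<Sum>j<m. a j * (y j * y ((j + t) mod m) + 1 + y j + b j + b (j + m)))
      + (\<Sum>k<m. a k * y ((k + m - t) mod m))
      + (\<Sum>j<m. of_bool (j + t < m) * y j * y ((j + t) mod m) + y j * b (j + m))"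
    using assms by (simp only: sum.distrib sum_mult_shift_mod less_imp_le)
  also have "(\<Sum>j<m. a j * (y j * y ((j + t) mod m) + 1 + y j + b j + b (j + m)))
      + (\<Sum>k<m. a k * y ((k + m - t) mod m))
      = (\<Sum>k<m. a k * (mm_perm m t y k + b k + b (k + m)))"
    by (simp add: mm_perm_def sum.distrib[symmetric] ring_distribs ac_simps)
  finally show ?thesis unfolding x_def by (simp only: add.assoc)
qed


section \<open>The map \<open>\<phi>\<close> is a permutation\<close>

lemma bit_recurrence_periodic:
  fixes u v :: "nat \<Rightarrow> bit"
  assumes rec: "\<And>k. u k + u (Suc k) * (1 + u (Suc (Suc k)))
                    = v k + v (Suc k) * (1 + v (Suc (Suc k)))"
    and u_per: "\<And>k. u (k + K) = u k" and v_per: "\<And>k. v (k + K) = v k" and odd: "odd K"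
  shows "u 0 = v 0"
proof (rule ccontr)
  assume "u 0 \<noteq> v 0"
  have skip: "a2 \<noteq> b2"
    if "a0 + a1 * (1 + a2) = b0 + b1 * (1 + b2)" "a1 + a2 * (1 + a3) = b1 + b2 * (1 + b3)" "a0 \<noteq> b0"
    for a0 a1 a2 a3 b0 b1 b2 b3 :: bit
    using that by (cases a0; cases a1; cases a2; cases a3; cases b0; cases b1; cases b2; cases b3) simp_all
  have alternate: "a2 = a1 + 1"
    if "a0 + a1 * (1 + a2) = b0 + b1 * (1 + b2)" "a0 \<noteq> b0" "a1 \<noteq> b1" "a2 \<noteq> b2"
    for a0 a1 a2 b0 b1 b2 :: bit
    using that by (cases a0; cases a1; cases a2; cases b0; cases b1; cases b2) simp_all
  have even_diff: "u (2 * k) \<noteq> v (2 * k)" for k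
  proof (induction k)
    case (Suc k)
    show ?case using skip[OF rec rec Suc.IH] by simp
  qed (use \<open>u 0 \<noteq> v 0\<close> in simp)
  have diff: "u k \<noteq> v k" for k
  proof (cases "even k")
    case True
    then show ?thesis using even_diff[of "k div 2"] by simp
  next
    case False
    then have "even (k + K)" using odd by simp
    then show ?thesis using even_diff[of "(k + K) div 2"] by (simp add: u_per v_per)
  qed
  have alternating: "u (Suc k) = u 1 + of_nat k" for k
  proof (induction k)
    case (Suc k)
    have "u (Suc (Suc k)) = u (Suc k) + 1" by (rule alternate[OF rec diff diff diff])
    with Suc.IH show ?case by (simp add: add.assoc)
  qed simp
  have "u (Suc K) = u 1 + 1" using alternating[of K] odd by (simp add: of_nat_bit)
  then show False using u_per[of 1] by (cases "u 1") simp_all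
qed

lemma add_mult_mod_period: "(i + (k + m div gcd m t) * t) mod m = (i + k * t) mod (m::nat)"
proof -
  have "m div gcd m t * t = m * (t div gcd m t)"
    by (metis div_mult_swap gcd_dvd1 gcd_dvd2 mult.commute)
  then have "i + (k + m div gcd m t) * t = (i + k * t) + (t div gcd m t) * m"
    by (simp add: algebra_simps)
  then show ?thesis by (metis mod_mult_self1)
qed

lemma mm_perm_at_shift:
  assumes "j < m" "t < m"
  shows "mm_perm m t y ((j + t) mod m)
       = y j + y ((j + t) mod m) * (1 + y (((j + t) mod m + t) mod m)) + 1"
proof -
  have "mm_perm m t y ((j + t) mod m)
      = y ((j + t) mod m) * y (((j + t) mod m + t) mod m) + y j + y ((j + t) mod m) + 1"
    using assms by (simp add: mm_perm_def mod_add_diff_cancel)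
  then show ?thesis by (simp add: ring_distribs ac_simps)
qed

lemma inj_on_mm_perm:
  assumes "t < m" "odd (m div gcd m t)"
  shows "inj_on (mm_perm m t) (cube m)"
proof (rule inj_onI, rule ext)
  fix y z :: "nat \<Rightarrow> bit" and i
  assume y: "y \<in> cube m" and z: "z \<in> cube m" and eq: "mm_perm m t y = mm_perm m t z"
  show "y i = z i"
  proof (cases "i < m")
    case False
    then show ?thesis using y z by (simp add: cube_def)
  next
    case True
    define p where "p k = (i + k * t) mod m" for k
    have p_less: "p k < m" for k using assms(1) by (simp add: p_def)
    have p_Suc: "p (Suc k) = (p k + t) mod m" for k
      by (simp add: p_def mod_add_right_eq algebra_simps)
    have "y (p 0) = z (p 0)"
    proof (rule bit_recurrence_periodic[where K = "m div gcd m t"])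
      show "y (p k) + y (p (Suc k)) * (1 + y (p (Suc (Suc k))))
          = z (p k) + z (p (Suc k)) * (1 + z (p (Suc (Suc k))))" for k
        using mm_perm_at_shift[OF p_less[of k] assms(1), of y]
          mm_perm_at_shift[OF p_less[of k] assms(1), of z]
          fun_cong[OF eq, of "p (Suc k)"]
        by (simp add: p_Suc)
    qed (simp_all add: p_def add_mult_mod_period assms(2))
    then show ?thesis using True by (simp add: p_def)
  qed
qed

lemma ft_bent:
  assumes "t < m" "odd (m div gcd m t)"
  shows "bent (2*m) (ft m t g)"
proof (rule bent_mm[OF inj_on_mm_perm[OF assms]])
  show "mm_perm m t ` cube m \<subseteq> cube m" by (auto simp: mm_perm_def cube_def)
qed (rule ft_mm_point[OF assms(1)])


section \<open>Rotation symmetry\<close>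

lemma rot_double_half_pair:
  assumes "i < m"
  shows "rot (2*m) x i = x ((i + 1) mod m) \<and> rot (2*m) x (i + m) = x ((i + 1) mod m + m)
       \<or> rot (2*m) x i = x ((i + 1) mod m + m) \<and> rot (2*m) x (i + m) = x ((i + 1) mod m)"
proof (cases "i + 1 < m")
  case True
  then show ?thesis using assms by (simp add: rot_def)
next
  case False
  then have "Suc i = m" using assms by simp
  moreover have "Suc (i + m) mod (2*m) = 0" using \<open>Suc i = m\<close> by (metis add_Suc mod_self mult_2)
  ultimately show ?thesis using assms by (simp add: rot_def)
qed

lemma sum_ft_term_rot:
  assumes "0 < m"
  shows "(\<Sum>i<2*m. ft_term m t (rot (2*m) x) i) = (\<Sum>i<2*m. ft_term m t x i)"
proof -
  have "ft_term m t (rot (2*m) x) i = ft_term m t x ((i + 1) mod (2*m))" if i: "i < 2*m" for i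
  proof -
    have r: "rot (2*m) x j = x (Suc j mod (2*m))" if "j < 2*m" for j
      using that by (simp add: rot_def)
    have shift: "Suc ((i + s) mod (2*m)) mod (2*m) = (Suc i mod (2*m) + s) mod (2*m)" for s
      by (metis add_Suc mod_Suc_eq mod_add_left_eq)
    show ?thesis unfolding ft_term_def using i assms by (simp add: r shift)
  qed
  then have "(\<Sum>i<2*m. ft_term m t (rot (2*m) x) i) = (\<Sum>i<2*m. ft_term m t x ((i + 1) mod (2*m)))"
    by (intro sum.cong) auto
  also have "\<dots> = (\<Sum>i<2*m. ft_term m t x i)" by (rule sum_lessThan_add_mod)
  finally show ?thesis .
qed

lemma ft_rotation_symmetric:
  assumes "0 < m" and sym: "rotation_symmetric m (rpoly_eval m g)"
  shows "rotation_symmetric (2*m) (ft m t g)"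
  unfolding rotation_symmetric_def
proof
  fix x :: "nat \<Rightarrow> bit"
  define r where "r = rot (2*m) x"
  have pairs: "(\<Sum>i<m. r i * r (i + m)) = (\<Sum>i<m. x i * x (i + m))"
  proof -
    have "r i * r (i + m) = x ((i + 1) mod m) * x ((i + 1) mod m + m)" if "i < m" for i
      using rot_double_half_pair[OF that, of x] by (auto simp: r_def mult.commute)
    then have "(\<Sum>i<m. r i * r (i + m)) = (\<Sum>i<m. x ((i + 1) mod m) * x ((i + 1) mod m + m))"
      by (intro sum.cong) auto
    also have "\<dots> = (\<Sum>i<m. x i * x (i + m))"
      by (rule sum_lessThan_add_mod[where h = "\<lambda>k. x k * x (k + m)"])
    finally show ?thesis .
  qed
  define z where "z i = (if i < m then x i + x (i + m) else 0)" for i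
  have "z \<in> cube m" by (simp add: z_def cube_def)
  have "rpoly_eval m g (\<lambda>i. r i + r (i + m)) = rpoly_eval m g (rot m z)"
  proof (rule rpoly_eval_cong)
    fix i assume "i < m"
    then show "r i + r (i + m) = rot m z i"
      using rot_double_half_pair[of i m x] assms by (auto simp: r_def rot_def z_def add.commute)
  qed
  also have "\<dots> = rpoly_eval m g z" using sym \<open>z \<in> cube m\<close> by (simp add: rotation_symmetric_def)
  also have "\<dots> = rpoly_eval m g (\<lambda>i. x i + x (i + m))" by (rule rpoly_eval_cong) (simp add: z_def)
  finally show "ft m t g (rot (2*m) x) = ft m t g x"
    using pairs sum_ft_term_rot[OF assms(1)] unfolding ft_def r_def by simp
qed


section \<open>Algebraic normal form and degree\<close>

lemma prod_of_bool_mem: "finite w \<Longrightarrow> (\<Prod>i\<in>w. of_bool (i \<in> v) :: bit) = of_bool (w \<subseteq> v)"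
  by (induction w rule: finite_induct) auto

lemma rpoly_eval_indicator:
  assumes "v \<subseteq> {..<n}"
  shows "rpoly_eval n c (\<lambda>i. of_bool (i \<in> v)) = (\<Sum>w\<in>Pow v. c w)"
proof -
  have "rpoly_eval n c (\<lambda>i. of_bool (i \<in> v)) = (\<Sum>w\<in>Pow {..<n}. if w \<subseteq> v then c w else 0)"
    unfolding rpoly_eval_def
    by (intro sum.cong refl) (auto simp: prod_of_bool_mem finite_subset)
  also have "\<dots> = (\<Sum>w\<in>{w\<in>Pow {..<n}. w \<subseteq> v}. c w)"
    using sum.inter_filter[of "Pow {..<n}" c "\<lambda>w. w \<subseteq> v"] by simp
  also have "{w\<in>Pow {..<n}. w \<subseteq> v} = Pow v" using assms by auto
  finally show ?thesis .
qed

lemma rpoly_coeff_eq_0: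
  assumes c: "is_rpoly n c" and zero: "\<forall>x\<in>cube n. rpoly_eval n c x = 0"
  shows "c u = 0"
proof (cases "u \<subseteq> {..<n}")
  case False
  then show ?thesis using c unfolding is_rpoly_def by blast
next
  case True
  then show ?thesis
  proof (induction "card u" arbitrary: u rule: less_induct)
    case less
    have "finite u" using finite_subset[OF less.prems finite_lessThan] .
    have "(\<lambda>i. of_bool (i \<in> u)) \<in> cube n" using less.prems by (auto simp: cube_def)
    then have "0 = (\<Sum>w\<in>Pow u. c w)"
      using zero rpoly_eval_indicator[OF less.prems, of c] by simp
    also have "\<dots> = c u + (\<Sum>w\<in>Pow u - {u}. c w)"
      using \<open>finite u\<close> by (simp add: sum.remove)
    also have "(\<Sum>w\<in>Pow u - {u}. c w) = 0"
    proof (rule sum.neutral, rule ballI)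
      fix w assume "w \<in> Pow u - {u}"
      then have "card w < card u" "w \<subseteq> {..<n}"
        using \<open>finite u\<close> less.prems by (auto intro: psubset_card_mono)
      then show "c w = 0" using less.hyps by blast
    qed
    finally show ?case by simp
  qed
qed

lemma rpoly_eval_add: "rpoly_eval n (\<lambda>u. c u + c' u) x = rpoly_eval n c x + rpoly_eval n c' x"
  by (simp add: rpoly_eval_def sum.distrib ring_distribs)

lemma rpoly_eval_sum: "rpoly_eval n (\<lambda>u. \<Sum>j\<in>J. c j u) x = (\<Sum>j\<in>J. rpoly_eval n (c j) x)"
  unfolding rpoly_eval_def sum_distrib_right by (rule sum.swap)

lemma rpoly_eval_mult_const: "rpoly_eval n (\<lambda>u. s * c u) x = s * rpoly_eval n c x"
  by (simp add: rpoly_eval_def sum_distrib_left mult.assoc)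

lemma rpoly_unique:
  assumes "is_rpoly n c" "is_rpoly n c'" "\<forall>x\<in>cube n. rpoly_eval n c x = rpoly_eval n c' x"
  shows "c = c'"
proof
  fix u
  have "is_rpoly n (\<lambda>u. c u + c' u)"
    using assms(1,2) unfolding is_rpoly_def by (metis add.right_neutral add_0)
  moreover have "\<forall>x\<in>cube n. rpoly_eval n (\<lambda>u. c u + c' u) x = 0"
    using assms(3) by (simp add: rpoly_eval_add)
  ultimately have "c u + c' u = 0" by (rule rpoly_coeff_eq_0)
  then show "c u = c' u" by (simp add: bit_add_eq_0_iff)
qed

lemma alg_degree_eqI:
  assumes "is_rpoly n c" "\<forall>x\<in>cube n. rpoly_eval n c x = f x"
  shows "alg_degree n f = rpoly_degree c"
proof -
  have "(THE c. is_rpoly n c \<and> (\<forall>x\<in>cube n. rpoly_eval n c x = f x)) = c"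
  proof (rule the_equality)
    fix c' assume "is_rpoly n c' \<and> (\<forall>x\<in>cube n. rpoly_eval n c' x = f x)"
    then show "c' = c" using assms by (intro rpoly_unique) auto
  qed (use assms in simp)
  then show ?thesis unfolding alg_degree_def by simp
qed

lemma finite_rpoly_support: "is_rpoly n c \<Longrightarrow> finite {u. c u \<noteq> 0}"
  unfolding is_rpoly_def by (rule finite_subset[of _ "Pow {..<n}"]) auto

lemma card_le_rpoly_degree:
  assumes "is_rpoly n c" "c u \<noteq> 0"
  shows "card u \<le> rpoly_degree c"
  unfolding rpoly_degree_def using finite_rpoly_support[OF assms(1)] assms(2) by (intro Max_ge) auto

lemma rpoly_degree_attained:
  assumes "is_rpoly n c" "0 < rpoly_degree c"
  obtains u where "c u \<noteq> 0" "card u = rpoly_degree c"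
proof -
  have "rpoly_degree c \<in> insert 0 (card ` {u. c u \<noteq> 0})"
    unfolding rpoly_degree_def using finite_rpoly_support[OF assms(1)] by (intro Max_in) auto
  then show ?thesis using assms(2) that by auto
qed

lemma rpoly_degree_eqI:
  assumes "is_rpoly n c" "\<And>u. c u \<noteq> 0 \<Longrightarrow> card u \<le> d" "c u0 \<noteq> 0" "card u0 = d"
  shows "rpoly_degree c = d"
  unfolding rpoly_degree_def
proof (rule Max_eqI)
  show "finite (insert 0 (card ` {u. c u \<noteq> 0}))"
    using finite_rpoly_support[OF assms(1)] by simp
qed (use assms(2-4) in auto)

definition rpoly_monom :: "nat set \<Rightarrow> nat set \<Rightarrow> bit" where
  "rpoly_monom S u = of_bool (u = S)"

lemma rpoly_eval_monom:
  assumes "S \<subseteq> {..<n}"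
  shows "rpoly_eval n (rpoly_monom S) x = (\<Prod>i\<in>S. x i)"
proof -
  have "rpoly_eval n (rpoly_monom S) x = (\<Sum>w\<in>Pow {..<n}. if w = S then (\<Prod>i\<in>w. x i) else 0)"
    unfolding rpoly_eval_def rpoly_monom_def by (rule sum.cong) auto
  then show ?thesis using assms by simp
qed

text \<open>The coefficients of \<open>\<gamma>(x_0 + x_m, \<dots>, x_{m-1} + x_{2m-1})\<close>: the product
\<open>\<Prod>i\<in>w. (x_i + x_{i+m})\<close> expands into one monomial for each \<open>S \<subseteq> w\<close>, taking \<open>x_i\<close> for
\<open>i \<in> S\<close> and \<open>x_{i+m}\<close> for \<open>i \<in> w - S\<close>.\<close>

definition pair_subst :: "nat \<Rightarrow> (nat set \<Rightarrow> bit) \<Rightarrow> nat set \<Rightarrow> bit" where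
  "pair_subst m g u = (\<Sum>w\<in>Pow {..<m}. g w * (\<Sum>S\<in>Pow w. rpoly_monom (S \<union> (\<lambda>i. i + m) ` (w - S)) u))"

lemma prod_union_shift:
  fixes m :: nat
  assumes "w \<subseteq> {..<m}" "S \<subseteq> w"
  shows "(\<Prod>i\<in>S \<union> (\<lambda>i. i + m) ` (w - S). x i) = (\<Prod>i\<in>S. x i) * (\<Prod>i\<in>w - S. x (i + m))"
proof -
  have "finite w" using finite_subset[OF assms(1) finite_lessThan] .
  then have "finite S" "finite ((\<lambda>i. i + m) ` (w - S))"
    using finite_subset[OF assms(2)] by simp_all
  moreover have "S \<inter> (\<lambda>i. i + m) ` (w - S) = {}" using assms by auto
  ultimately have "(\<Prod>i\<in>S \<union> (\<lambda>i. i + m) ` (w - S). x i)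
      = (\<Prod>i\<in>S. x i) * (\<Prod>i\<in>(\<lambda>i. i + m) ` (w - S). x i)"
    by (rule prod.union_disjoint)
  also have "(\<Prod>i\<in>(\<lambda>i. i + m) ` (w - S). x i) = (\<Prod>i\<in>w - S. x (i + m))"
    by (simp add: prod.reindex)
  finally show ?thesis .
qed

lemma rpoly_eval_pair_subst:
  "rpoly_eval (2*m) (pair_subst m g) x = rpoly_eval m g (\<lambda>i. x i + x (i + m))"
proof -
  have "rpoly_eval (2*m) (pair_subst m g) x
      = (\<Sum>w\<in>Pow {..<m}. g w * (\<Sum>S\<in>Pow w. rpoly_eval (2*m) (rpoly_monom (S \<union> (\<lambda>i. i + m) ` (w - S))) x))"
    unfolding pair_subst_def rpoly_eval_sum rpoly_eval_mult_const ..
  also have "\<dots> = (\<Sum>w\<in>Pow {..<m}. g w * (\<Prod>i\<in>w. x i + x (i + m)))"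
  proof (intro sum.cong refl arg_cong2[where f = "(*)"])
    fix w assume "w \<in> Pow {..<m}"
    then have w: "w \<subseteq> {..<m}" by simp
    have "finite w" using finite_subset[OF w finite_lessThan] .
    have "(\<Sum>S\<in>Pow w. rpoly_eval (2*m) (rpoly_monom (S \<union> (\<lambda>i. i + m) ` (w - S))) x)
        = (\<Sum>S\<in>Pow w. (\<Prod>i\<in>S. x i) * (\<Prod>i\<in>w - S. x (i + m)))"
    proof (intro sum.cong refl)
      fix S assume "S \<in> Pow w"
      then have "S \<union> (\<lambda>i. i + m) ` (w - S) \<subseteq> {..<2*m}" using w by auto
      then show "rpoly_eval (2*m) (rpoly_monom (S \<union> (\<lambda>i. i + m) ` (w - S))) x
          = (\<Prod>i\<in>S. x i) * (\<Prod>i\<in>w - S. x (i + m))"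
        using w \<open>S \<in> Pow w\<close> by (simp add: rpoly_eval_monom prod_union_shift)
    qed
    also have "\<dots> = (\<Prod>i\<in>w. x i + x (i + m))"
      by (rule prod_add[OF \<open>finite w\<close>, symmetric])
    finally show "(\<Sum>S\<in>Pow w. rpoly_eval (2*m) (rpoly_monom (S \<union> (\<lambda>i. i + m) ` (w - S))) x)
        = (\<Prod>i\<in>w. x i + x (i + m))" .
  qed
  also have "\<dots> = rpoly_eval m g (\<lambda>i. x i + x (i + m))"
    unfolding rpoly_eval_def ..
  finally show ?thesis .
qed

lemma pair_subst_nonzero:
  assumes "pair_subst m g u \<noteq> 0"
  obtains w where "g w \<noteq> 0" "u \<subseteq> {..<2*m}" "card u \<le> card w"
proof -
  obtain w where w: "w \<subseteq> {..<m}"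
    and "g w * (\<Sum>S\<in>Pow w. rpoly_monom (S \<union> (\<lambda>i. i + m) ` (w - S)) u) \<noteq> 0"
    using sum.not_neutral_contains_not_neutral[OF assms[unfolded pair_subst_def]] by blast
  then have "g w \<noteq> 0" and nz: "(\<Sum>S\<in>Pow w. rpoly_monom (S \<union> (\<lambda>i. i + m) ` (w - S)) u) \<noteq> 0"
    by auto
  obtain S where "S \<in> Pow w" "rpoly_monom (S \<union> (\<lambda>i. i + m) ` (w - S)) u \<noteq> 0"
    by (rule sum.not_neutral_contains_not_neutral[OF nz])
  then have S: "S \<subseteq> w" and u: "u = S \<union> (\<lambda>i. i + m) ` (w - S)"
    by (simp_all add: rpoly_monom_def)
  have "finite w" using finite_subset[OF w(1) finite_lessThan] .
  have "card u \<le> card S + card ((\<lambda>i. i + m) ` (w - S))" unfolding u by (rule card_Un_le)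
  also have "\<dots> \<le> card S + card (w - S)" by (simp add: card_image_le \<open>finite w\<close>)
  also have "\<dots> = card w" using S \<open>finite w\<close> by (simp add: card_Diff_subset card_mono finite_subset)
  finally have "card u \<le> card w" .
  moreover have "u \<subseteq> {..<2*m}" using w S u by auto
  ultimately show ?thesis using that \<open>g w \<noteq> 0\<close> by blast
qed

lemma pair_subst_low:
  assumes "u \<subseteq> {..<m}"
  shows "pair_subst m g u = g u"
proof -
  have "(\<Sum>S\<in>Pow w. rpoly_monom (S \<union> (\<lambda>i. i + m) ` (w - S)) u) = of_bool (w = u)"
    if w: "w \<subseteq> {..<m}" for w
  proof -
    have "rpoly_monom (S \<union> (\<lambda>i. i + m) ` (w - S)) u = of_bool (S = w \<and> w = u)"
      if S: "S \<subseteq> w" for S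
    proof (cases "S = w")
      case False
      then obtain j where "j \<in> w - S" using S by auto
      then have "j + m \<in> S \<union> (\<lambda>i. i + m) ` (w - S)" "j + m \<notin> u" using assms by auto
      then show ?thesis using False by (auto simp: rpoly_monom_def)
    qed (auto simp: rpoly_monom_def)
    then have "(\<Sum>S\<in>Pow w. rpoly_monom (S \<union> (\<lambda>i. i + m) ` (w - S)) u)
        = (\<Sum>S\<in>Pow w. if S = w then of_bool (w = u) else 0)"
      by (intro sum.cong) auto
    also have "\<dots> = of_bool (w = u)" using finite_subset[OF w] by simp
    finally show ?thesis .
  qed
  then have "pair_subst m g u = (\<Sum>w\<in>Pow {..<m}. if w = u then g w else 0)"
    unfolding pair_subst_def by (intro sum.cong) auto
  also have "\<dots> = g u" using assms by simp
  finally show ?thesis .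
qed

definition ft_anf :: "nat \<Rightarrow> nat \<Rightarrow> (nat set \<Rightarrow> bit) \<Rightarrow> nat set \<Rightarrow> bit" where
  "ft_anf m t g u =
     (\<Sum>i<2*m. rpoly_monom {i, (i + t) mod (2*m), (i + m) mod (2*m)} u
               + rpoly_monom {i, (i + t) mod (2*m)} u)
     + (\<Sum>i<m. rpoly_monom {i, i + m} u) + pair_subst m g u"

lemma ft_indices_distinct:
  fixes i t m :: nat
  assumes "0 < t" "t < m" "i < 2*m"
  shows "i \<noteq> (i + t) mod (2*m)" "i \<noteq> (i + m) mod (2*m)" "(i + t) mod (2*m) \<noteq> (i + m) mod (2*m)"
  using assms by (auto simp: mod_if)

lemma rpoly_eval_ft_anf:
  assumes "0 < t" "t < m"
  shows "rpoly_eval (2*m) (ft_anf m t g) x = ft m t g x"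
proof -
  have cubic: "rpoly_eval (2*m) (\<lambda>u. rpoly_monom {i, (i + t) mod (2*m), (i + m) mod (2*m)} u
        + rpoly_monom {i, (i + t) mod (2*m)} u) x
      = ft_term m t x i"
    if "i < 2*m" for i
  proof -
    have "{i, (i + t) mod (2*m), (i + m) mod (2*m)} \<subseteq> {..<2*m}" "{i, (i + t) mod (2*m)} \<subseteq> {..<2*m}"
      using that by auto
    then show ?thesis
      using ft_indices_distinct[OF assms that]
      by (simp add: ft_term_def rpoly_eval_add rpoly_eval_monom mult.assoc)
  qed
  have quadratic: "rpoly_eval (2*m) (rpoly_monom {i, i + m}) x = x i * x (i + m)" if "i < m" for i
  proof -
    have "{i, i + m} \<subseteq> {..<2*m}" using that by auto
    then show ?thesis using assms by (simp add: rpoly_eval_monom)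
  qed
  have "rpoly_eval (2*m) (ft_anf m t g) x
      = (\<Sum>i<2*m. rpoly_eval (2*m) (\<lambda>u. rpoly_monom {i, (i + t) mod (2*m), (i + m) mod (2*m)} u
          + rpoly_monom {i, (i + t) mod (2*m)} u) x)
        + (\<Sum>i<m. rpoly_eval (2*m) (rpoly_monom {i, i + m}) x)
        + rpoly_eval m g (\<lambda>i. x i + x (i + m))"
    unfolding ft_anf_def rpoly_eval_add rpoly_eval_sum rpoly_eval_pair_subst ..
  also have "\<dots> = ft m t g x"
    unfolding ft_def by (simp add: cubic quadratic)
  finally show ?thesis .
qed

lemma ft_anf_nonzero:
  assumes g: "is_rpoly m g" and nz: "ft_anf m t g u \<noteq> 0"
  shows "u \<subseteq> {..<2*m} \<and> card u \<le> max 3 (rpoly_degree g)"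
proof -
  consider (cubic) "(\<Sum>i<2*m. rpoly_monom {i, (i + t) mod (2*m), (i + m) mod (2*m)} u
               + rpoly_monom {i, (i + t) mod (2*m)} u) \<noteq> 0"
    | (quadratic) "(\<Sum>i<m. rpoly_monom {i, i + m} u) \<noteq> 0"
    | (subst) "pair_subst m g u \<noteq> 0"
    using nz unfolding ft_anf_def by fastforce
  then show ?thesis
  proof cases
    case cubic
    then obtain i where i: "i \<in> {..<2*m}" and monom: "rpoly_monom {i, (i + t) mod (2*m), (i + m) mod (2*m)} u
        + rpoly_monom {i, (i + t) mod (2*m)} u \<noteq> 0"
      by (rule sum.not_neutral_contains_not_neutral)
    have "u = {i, (i + t) mod (2*m), (i + m) mod (2*m)} \<or> u = {i, (i + t) mod (2*m)}"
      using monom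
      by (cases "u = {i, (i + t) mod (2*m), (i + m) mod (2*m)}"; cases "u = {i, (i + t) mod (2*m)}")
        (simp_all add: rpoly_monom_def)
    moreover have "card {i, (i + t) mod (2*m), (i + m) mod (2*m)} \<le> 3" "card {i, (i + t) mod (2*m)} \<le> 3"
      by (simp_all add: card_insert_if)
    ultimately show ?thesis using i by auto
  next
    case quadratic
    then obtain i where i: "i \<in> {..<m}" and "rpoly_monom {i, i + m} u \<noteq> 0"
      by (rule sum.not_neutral_contains_not_neutral)
    then have "u = {i, i + m}" by (simp add: rpoly_monom_def)
    moreover have "card {i, i + m} \<le> 3" by (simp add: card_insert_if)
    ultimately show ?thesis using i by auto
  next
    case subst
    then obtain w where "g w \<noteq> 0" "u \<subseteq> {..<2*m}" "card u \<le> card w"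
      by (rule pair_subst_nonzero)
    then show ?thesis using card_le_rpoly_degree[OF g] by fastforce
  qed
qed

lemma ft_anf_low:
  assumes "u \<subseteq> {..<m}" "3 \<le> card u"
  shows "ft_anf m t g u = g u"
proof -
  have "rpoly_monom {i, (i + t) mod (2*m), (i + m) mod (2*m)} u = 0" if "i < 2*m" for i
  proof (cases "i < m")
    case True
    then have "(i + m) mod (2*m) = i + m" by simp
    then show ?thesis using assms(1) by (auto simp: rpoly_monom_def)
  qed (use assms(1) in \<open>auto simp: rpoly_monom_def\<close>)
  moreover have "rpoly_monom {i, j} u = 0" for i j
  proof -
    have "card {i, j} < 3" by (simp add: card_insert_if)
    then show ?thesis using assms(2) by (auto simp: rpoly_monom_def)
  qed
  ultimately show ?thesis by (simp add: ft_anf_def pair_subst_low[OF assms(1)])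
qed

lemma alg_degree_ft:
  assumes "0 < t" "t < m" "is_rpoly m g" "3 \<le> rpoly_degree g"
  shows "alg_degree (2*m) (ft m t g) = rpoly_degree g"
proof -
  have support: "u \<subseteq> {..<2*m} \<and> card u \<le> rpoly_degree g" if "ft_anf m t g u \<noteq> 0" for u
    using ft_anf_nonzero[OF assms(3) that] assms(4) by simp
  then have anf: "is_rpoly (2*m) (ft_anf m t g)" by (auto simp: is_rpoly_def)
  obtain u0 where u0: "g u0 \<noteq> 0" "card u0 = rpoly_degree g"
    using rpoly_degree_attained[OF assms(3)] assms(4) by auto
  then have "u0 \<subseteq> {..<m}" using assms(3) by (auto simp: is_rpoly_def)
  have "alg_degree (2*m) (ft m t g) = rpoly_degree (ft_anf m t g)"
    using anf by (rule alg_degree_eqI) (simp add: rpoly_eval_ft_anf[OF assms(1,2)])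
  also have "\<dots> = rpoly_degree g"
    using anf support u0 ft_anf_low[OF \<open>u0 \<subseteq> {..<m}\<close>] assms(4) by (intro rpoly_degree_eqI) auto
  finally show ?thesis .
qed

theorem theorem2:
  fixes m n t d :: nat and g :: "nat set \<Rightarrow> bit" and f :: "(nat \<Rightarrow> bit) \<Rightarrow> bit"
  assumes "m \<ge> 2" and "n = 2 * m"
    and "1 \<le> t" and "t \<le> m - 1"
    and "odd (m div gcd m t)"
    and "is_rpoly m g"
    and "\<And>x. f x = (\<Sum>i<n. x i * x ((i + t) mod n) * x ((i + m) mod n) + x i * x ((i + t) mod n))
                 + (\<Sum>i<m. x i * x (i + m))
                 + rpoly_eval m g (\<lambda>i. x i + x (i + m))"
  shows "bent n f \<and>
    (rotation_symmetric m (rpoly_eval m g) \<and> rpoly_degree g = d \<and> d \<ge> 3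
      \<longrightarrow> rotation_symmetric n f \<and> bent n f \<and> alg_degree n f = d)"
proof -
  have t: "0 < t" "t < m" using assms(1,3,4) by auto
  have f: "f = ft m t g" using assms(2,7) by (simp add: fun_eq_iff ft_def ft_term_def)
  have "bent n f" unfolding f assms(2) by (rule ft_bent[OF t(2) assms(5)])
  moreover have "rotation_symmetric n f \<and> alg_degree n f = d"
    if "rotation_symmetric m (rpoly_eval m g)" "rpoly_degree g = d" "3 \<le> d"
    unfolding f assms(2)
    using ft_rotation_symmetric[OF _ that(1)] alg_degree_ft[OF t assms(6)] that t by auto
  ultimately show ?thesis by blast
qed

end
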